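(* Let $J_1,J_2\in\mathbb{R}$, $\beta>0$, $a=e^{J_1\beta}$, $b=e^{J_2\beta}$, and let $F$ and $M_1$ be as below. 1) If $J_2>0$, then for every integer $p\ge2$ the equation $F^p(u)=u$ has no solution $u\in M_1\setminus \mathrm{Fix}(F)$. 2) If $J_2<0$, then for every integer $p\ge3$ the equation $F^p(u)=u$ has no solution $u\in M_1\setminus(\mathrm{Fix}(F)\cup\mathrm{Per}_2(F))$.
   Context: $F:\mathbb{R}^4_+\to\mathbb{R}^4_+$ (positive coordinates) is $F(u)=(u_1',u_2',u_3',u_4')$ with $u_1'=a(bu_1+b^{-1}u_2)^2$, $u_2'=a^{-1}(bu_3+b^{-1}u_4)^2$, $u_3'=a^{-1}(b^{-1}u_1+bu_2)^2$, $u_4'=a(b^{-1}u_3+bu_4)^2$. $M_1=\{u\in\mathbb{R}^4_+:\ u_1=u_4,\ u_2=u_3\}$. $F^p$ is the $p$-th iterate, $\mathrm{Fix}(F)=\{u:F(u)=u\}$, and $\mathrm{Per}_2(F)$ is the set of points of prime (least) period $2$ of $F$. *)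

theory Defs
  imports Complex_Main
begin

type_synonym vec4 = "real \<times> real \<times> real \<times> real"

definition F :: "real \<Rightarrow> real \<Rightarrow> vec4 \<Rightarrow> vec4" where
  "F a b u = (case u of (u1, u2, u3, u4) \<Rightarrow>
     (a * (b * u1 + u2 / b)^2,
      (1 / a) * (b * u3 + u4 / b)^2,
      (1 / a) * (u1 / b + b * u2)^2,
      a * (u3 / b + b * u4)^2))"

definition pos4 :: "vec4 set" where
  "pos4 = {(u1, u2, u3, u4). u1 > 0 \<and> u2 > 0 \<and> u3 > 0 \<and> u4 > 0}"

definition M1 :: "vec4 set" where
  "M1 = {u \<in> pos4. case u of (u1, u2, u3, u4) \<Rightarrow> u1 = u4 \<and> u2 = u3}"

definition Fix :: "(vec4 \<Rightarrow> vec4) \<Rightarrow> vec4 set" where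
  "Fix f = {u \<in> pos4. f u = u}"

definition Per2 :: "(vec4 \<Rightarrow> vec4) \<Rightarrow> vec4 set" where
  "Per2 f = {u \<in> pos4. (f ^^ 2) u = u \<and> f u \<noteq> u}"

end

theory Submission
  imports Defs "HOL-Analysis.Product_Vector"
begin

(* On the invariant plane M1 = {u1 = u4, u2 = u3} the map F acts as a planar
   map F_plane (x, y) = (a (b x + y/b)^2, a^-1 (x/b + b y)^2), which is homogeneous of
   degree 2: F_plane (l q) = l^2 F_plane q.  Consequently the ratio t = x/y evolves by a
   one-dimensional map ratio_map on (0, oo), which is strictly increasing for b > 1
   (i.e. J2 > 0) and strictly decreasing for b < 1 (i.e. J2 < 0), so that in the latter
   case its second iterate is increasing.  Taking m = 1 (J2 > 0) resp. m = 2 (J2 < 0) yields the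
   theorem; in fact the argument works for every period p >= 1. *)

text \<open>Periodic points of strictly increasing maps are fixed: the orbit of a point that is
  not fixed drifts monotonically away from it.\<close>
lemma periodic_point_of_strict_mono_is_fixed:
  fixes g :: "'a::linorder \<Rightarrow> 'a"
  assumes mono: "strict_mono_on S g" and maps: "g ` S \<subseteq> S"
    and t: "t \<in> S" and p: "p \<ge> 1" and per: "(g ^^ p) t = t"
  shows "g t = t"
proof -
  have orbit_in_S: "(g ^^ n) t \<in> S" for n
    by (induction n) (use t maps in auto)
  have drift: "(t < g t \<longrightarrow> t < (g ^^ Suc n) t) \<and> (g t < t \<longrightarrow> (g ^^ Suc n) t < t)" for n
  proof (induction n)
    case (Suc n)
    let ?s = "(g ^^ Suc n) t"
    have "t < ?s \<Longrightarrow> g t < g ?s" "?s < t \<Longrightarrow> g ?s < g t"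
      using strict_mono_onD[OF mono] t orbit_in_S[of "Suc n"] by blast+
    then show ?case using Suc by auto
  qed simp
  show ?thesis
    using drift[of "p - 1"] per p by (cases "g t" t rule: linorder_cases) auto
qed

lemma funpow_homogeneous:
  fixes \<Phi> :: "'v::real_vector \<Rightarrow> 'v"
  assumes hom: "\<And>l q. \<Phi> (l *\<^sub>R q) = l^2 *\<^sub>R \<Phi> q"
  shows "(\<Phi> ^^ n) (l *\<^sub>R q) = l^(2^n) *\<^sub>R (\<Phi> ^^ n) q"
  by (induction n) (simp_all add: hom power_mult[symmetric] mult.commute)

lemma homogeneous_scaled_orbit:
  fixes \<Phi> :: "'v::real_vector \<Rightarrow> 'v"
  assumes hom: "\<And>l q. \<Phi> (l *\<^sub>R q) = l^2 *\<^sub>R \<Phi> q"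
    and scaled: "(\<Phi> ^^ m) q = \<mu> *\<^sub>R q"
  shows "\<exists>N. (\<Phi> ^^ (m * k)) q = \<mu>^N *\<^sub>R q \<and> (k > 0 \<longrightarrow> N > 0)"
proof (induction k)
  case 0
  show ?case by (intro exI[of _ 0]) simp
next
  case (Suc k)
  then obtain N where N: "(\<Phi> ^^ (m * k)) q = \<mu>^N *\<^sub>R q" by blast
  have "(\<Phi> ^^ (m * Suc k)) q = (\<Phi> ^^ m) ((\<Phi> ^^ (m * k)) q)"
    by (simp add: funpow_add)
  also have "\<dots> = (\<mu>^N)^(2^m) *\<^sub>R \<mu> *\<^sub>R q"
    by (simp add: N funpow_homogeneous[OF hom] scaled)
  also have "\<dots> = \<mu>^(N * 2^m + 1) *\<^sub>R q"
    by (simp add: power_mult power_add)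
  finally show ?case by (intro exI[of _ "N * 2^m + 1"]) simp
qed

lemma homogeneous_periodic_scaling_trivial:
  fixes \<Phi> :: "'v::real_vector \<Rightarrow> 'v"
  assumes hom: "\<And>l q. \<Phi> (l *\<^sub>R q) = l^2 *\<^sub>R \<Phi> q"
    and scaled: "(\<Phi> ^^ m) q = \<mu> *\<^sub>R q" and \<mu>: "\<mu> > 0" and q: "q \<noteq> 0"
    and k: "k \<ge> 1" and per: "(\<Phi> ^^ (m * k)) q = q"
  shows "\<mu> = 1"
proof -
  obtain N where N: "q = \<mu>^N *\<^sub>R q" "N > 0"
    using homogeneous_scaled_orbit[OF hom scaled, of k] k per by auto
  then have "\<mu>^N = 1^N"
    using q scaleR_cancel_right[of "\<mu>^N" q 1] by simp
  then show ?thesis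
    using power_eq_iff_eq_base[OF \<open>N > 0\<close>, of \<mu> 1] \<mu> by simp
qed

text \<open>The restriction of F to the plane M1, in the coordinates (u1, u2) = (u4, u3).\<close>
definition F_plane :: "real \<Rightarrow> real \<Rightarrow> real \<times> real \<Rightarrow> real \<times> real" where
  "F_plane a b q = (a * (b * fst q + snd q / b)^2, (1/a) * (fst q / b + b * snd q)^2)"

definition diag :: "real \<times> real \<Rightarrow> vec4" where
  "diag q = (fst q, snd q, snd q, fst q)"

definition quadrant :: "(real \<times> real) set" where
  "quadrant = {q. fst q > 0 \<and> snd q > 0}"

definition ratio :: "real \<times> real \<Rightarrow> real" where
  "ratio q = fst q / snd q"

text \<open>The induced dynamics of the ratio x/y.\<close>
definition ratio_map :: "real \<Rightarrow> real \<Rightarrow> real \<Rightarrow> real" where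
  "ratio_map a b t = a^2 * ((b^2 * t + 1) / (t + b^2))^2"

lemma M1_eq_diag_quadrant: "M1 = diag ` quadrant"
  by (force simp: M1_def pos4_def diag_def quadrant_def image_iff)

lemma diag_inj: "diag q = diag r \<longleftrightarrow> q = r"
  by (cases q, cases r) (auto simp: diag_def)

lemma F_funpow_diag: "(F a b ^^ n) (diag q) = diag ((F_plane a b ^^ n) q)"
proof (induction n)
  case (Suc n)
  have "F a b (diag r) = diag (F_plane a b r)" for r
    by (cases r) (simp add: F_def diag_def F_plane_def add.commute)
  then show ?case using Suc by simp
qed simp

lemma F_plane_homogeneous: "F_plane a b (l *\<^sub>R q) = l^2 *\<^sub>R F_plane a b q"
  by (simp add: F_plane_def prod_eq_iff field_simps power2_eq_square)

lemma F_plane_quadrant: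
  assumes a: "a > 0" and b: "b > 0" and q: "q \<in> quadrant"
  shows "(F_plane a b ^^ n) q \<in> quadrant"
proof -
  have "F_plane a b r \<in> quadrant" if "r \<in> quadrant" for r
  proof -
    have "b * fst r + snd r / b > 0" "fst r / b + b * snd r > 0"
      using b that by (simp_all add: quadrant_def add_pos_pos)
    then show ?thesis using a by (simp add: F_plane_def quadrant_def)
  qed
  then show ?thesis by (induction n) (simp_all add: q)
qed

text \<open>Homogeneity makes the ratio of the image depend only on the ratio of the point.\<close>
lemma ratio_F_plane:
  assumes a: "a > 0" and b: "b > 0" and q: "q \<in> quadrant"
  shows "ratio (F_plane a b q) = ratio_map a b (ratio q)"
proof -
  obtain x y where xy: "q = (x, y)" "x > 0" "y > 0"
    using q by (cases q) (auto simp: quadrant_def)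
  have num: "b * x + y / b = (b^2 * (x/y) + 1) * (y / b)"
    and den: "x / b + b * y = (x/y + b^2) * (y / b)"
    using b xy by (simp_all add: field_simps power2_eq_square)
  have "y / b \<noteq> 0" using b xy by simp
  then have "(b * x + y / b) / (x / b + b * y) = (b^2 * (x/y) + 1) / (x/y + b^2)"
    unfolding num den by simp
  moreover have "ratio (F_plane a b q) = a^2 * ((b * x + y / b) / (x / b + b * y))^2"
    using a by (simp add: xy ratio_def F_plane_def power_divide power2_eq_square)
  ultimately show ?thesis by (simp add: ratio_map_def ratio_def xy)
qed

lemma ratio_F_plane_funpow:
  assumes "a > 0" "b > 0" "q \<in> quadrant"
  shows "ratio ((F_plane a b ^^ n) q) = (ratio_map a b ^^ n) (ratio q)"
  by (induction n) (simp_all add: ratio_F_plane F_plane_quadrant assms)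

lemma equal_ratio_scaled:
  assumes q: "q \<in> quadrant" and r: "r \<in> quadrant" and eq: "ratio r = ratio q"
  shows "r = (fst r / fst q) *\<^sub>R q" "fst r / fst q > 0"
proof -
  have "fst r * snd q = fst q * snd r"
    using eq q r by (simp add: ratio_def quadrant_def field_simps)
  then show "r = (fst r / fst q) *\<^sub>R q"
    using q by (simp add: quadrant_def prod_eq_iff field_simps)
  show "fst r / fst q > 0" using q r by (simp add: quadrant_def)
qed

text \<open>The sign of b - 1 governs the monotonicity of the ratio map, through the identity
  h t - h s = (b^4 - 1)(t - s) / ((t + b^2)(s + b^2)) for h t = (b^2 t + 1)/(t + b^2).\<close>
lemma ratio_map_core_diff:
  fixes b s t :: real
  assumes "s > 0" "t > 0"
  shows "(b^2 * t + 1) / (t + b^2) - (b^2 * s + 1) / (s + b^2)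
           = (b^4 - 1) * (t - s) / ((t + b^2) * (s + b^2))"
proof -
  have "t + b^2 > 0" "s + b^2 > 0" using assms by (simp_all add: add_pos_nonneg)
  then show ?thesis by (simp add: field_simps)
qed

lemma ratio_core_pos:
  fixes b t :: real
  assumes "t > 0"
  shows "(b^2 * t + 1) / (t + b^2) > 0"
proof -
  have "b^2 * t \<ge> 0" using assms by simp
  then have "t + b^2 > 0" "b^2 * t + 1 > 0" using assms zero_le_power2[of b] by linarith+
  then show ?thesis by simp
qed

lemma ratio_map_pos:
  assumes "a > 0" "t > 0"
  shows "ratio_map a b t > 0"
proof -
  have "(b^2 * t + 1) / (t + b^2) \<noteq> 0" using ratio_core_pos[OF assms(2), of b] by linarith
  then show ?thesis using assms(1) by (simp add: ratio_map_def)
qed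

lemma ratio_map_strict_mono:
  assumes "a > 0" "b > 1"
  shows "strict_mono_on {0<..} (ratio_map a b)"
proof (rule strict_mono_onI)
  fix s t :: real assume st: "s \<in> {0<..}" "t \<in> {0<..}" "s < t"
  have "b^4 > 1" using assms one_less_power[of b 4] by simp
  then have "(b^4 - 1) * (t - s) / ((t + b^2) * (s + b^2)) > 0"
    using st by (simp add: add_pos_nonneg)
  then have "(b^2 * s + 1) / (s + b^2) < (b^2 * t + 1) / (t + b^2)"
    using ratio_map_core_diff[of s t b] st by simp
  moreover have "(b^2 * s + 1) / (s + b^2) > 0" using st ratio_core_pos by simp
  ultimately show "ratio_map a b s < ratio_map a b t"
    using assms by (simp add: ratio_map_def power_strict_mono)
qed

lemma ratio_map_strict_antimono:
  assumes "a > 0" "0 < b" "b < 1"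
  shows "strict_antimono_on {0<..} (ratio_map a b)"
proof (rule monotone_onI)
  fix s t :: real assume st: "s \<in> {0<..}" "t \<in> {0<..}" "s < t"
  have "b^4 < 1" using assms by (simp add: power_less_one_iff)
  then have "(b^4 - 1) * (t - s) / ((t + b^2) * (s + b^2)) < 0"
    using st by (simp add: add_pos_nonneg mult_neg_pos divide_neg_pos)
  then have "(b^2 * t + 1) / (t + b^2) < (b^2 * s + 1) / (s + b^2)"
    using ratio_map_core_diff[of s t b] st by simp
  moreover have "(b^2 * t + 1) / (t + b^2) > 0" using st ratio_core_pos by simp
  ultimately show "ratio_map a b t < ratio_map a b s"
    using assms by (simp add: ratio_map_def power_strict_mono)
qed

lemma ratio_map_twice_strict_mono:
  assumes "a > 0" "0 < b" "b < 1"
  shows "strict_mono_on {0<..} (ratio_map a b ^^ 2)"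
proof (rule strict_mono_onI)
  fix s t :: real assume st: "s \<in> {0<..}" "t \<in> {0<..}" "s < t"
  note anti = monotone_onD[OF ratio_map_strict_antimono[OF assms]]
  have "ratio_map a b t < ratio_map a b s" using anti st by blast
  then have "ratio_map a b (ratio_map a b s) < ratio_map a b (ratio_map a b t)"
    using anti ratio_map_pos assms st by simp
  then show "(ratio_map a b ^^ 2) s < (ratio_map a b ^^ 2) t"
    by (simp add: numeral_2_eq_2)
qed

lemma F_plane_period_reduction:
  assumes a: "a > 0" and b: "b > 0" and q: "q \<in> quadrant"
    and mono: "strict_mono_on {0<..} (ratio_map a b ^^ m)"
    and k: "k \<ge> 1" and per: "(F_plane a b ^^ (m * k)) q = q"
  shows "(F_plane a b ^^ m) q = q"
proof -
  let ?r = "(F_plane a b ^^ m) q"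
  have maps: "(ratio_map a b ^^ m) ` {0<..} \<subseteq> {0<..}"
  proof -
    have "(ratio_map a b ^^ n) t > 0" if "t > 0" for n and t :: real
      by (induction n) (simp_all add: that ratio_map_pos a)
    then show ?thesis by auto
  qed
  have t: "ratio q \<in> {0<..}" using q by (simp add: quadrant_def ratio_def)
  have "((ratio_map a b ^^ m) ^^ k) (ratio q) = ratio q"
    using ratio_F_plane_funpow[OF a b q, of "m * k"] per by (simp add: funpow_mult)
  then have "(ratio_map a b ^^ m) (ratio q) = ratio q"
    using periodic_point_of_strict_mono_is_fixed[OF mono maps t k] by blast
  then have "ratio ?r = ratio q"
    using ratio_F_plane_funpow[OF a b q] by simp
  then obtain \<mu> where \<mu>: "?r = \<mu> *\<^sub>R q" "\<mu> > 0"
    using equal_ratio_scaled[OF q F_plane_quadrant[OF a b q]] by blast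
  have "q \<noteq> 0" using q by (auto simp: quadrant_def)
  then have "\<mu> = 1"
    using homogeneous_periodic_scaling_trivial[OF F_plane_homogeneous \<mu> _ k per] by blast
  then show ?thesis using \<mu> by simp
qed

lemma F_M1_period_reduction:
  assumes "a > 0" "b > 0" and mono: "strict_mono_on {0<..} (ratio_map a b ^^ m)"
    and u: "u \<in> M1" and k: "k \<ge> 1" and per: "(F a b ^^ (m * k)) u = u"
  shows "(F a b ^^ m) u = u"
proof -
  obtain q where q: "u = diag q" "q \<in> quadrant"
    using u by (auto simp: M1_eq_diag_quadrant)
  have "(F_plane a b ^^ (m * k)) q = q"
    using per q by (simp add: F_funpow_diag diag_inj)
  then show ?thesis
    using F_plane_period_reduction[OF assms(1,2) q(2) mono k] q by (simp add: F_funpow_diag)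
qed

theorem lemma5:
  fixes J1 J2 \<beta> a b :: real
  assumes "\<beta> > 0" and "a = exp (J1 * \<beta>)" and "b = exp (J2 * \<beta>)"
  shows "(J2 > 0 \<longrightarrow> (\<forall>p::nat. p \<ge> 2 \<longrightarrow>
            \<not> (\<exists>u \<in> M1 - Fix (F a b). (F a b ^^ p) u = u)))
       \<and> (J2 < 0 \<longrightarrow> (\<forall>p::nat. p \<ge> 3 \<longrightarrow>
            \<not> (\<exists>u \<in> M1 - (Fix (F a b) \<union> Per2 (F a b)). (F a b ^^ p) u = u)))"
proof -
  have a: "a > 0" and b: "b > 0" using assms by simp_all
  have M1_pos4: "M1 \<subseteq> pos4" by (auto simp: M1_def)
  have case_pos: "\<not> (\<exists>u \<in> M1 - Fix (F a b). (F a b ^^ p) u = u)" if "J2 > 0" "p \<ge> 2" for p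
  proof
    assume "\<exists>u \<in> M1 - Fix (F a b). (F a b ^^ p) u = u"
    then obtain u where u: "u \<in> M1 - Fix (F a b)" "(F a b ^^ p) u = u" by blast
    have "b > 1" using assms that by simp
    then have "strict_mono_on {0<..} (ratio_map a b ^^ 1)"
      using ratio_map_strict_mono[OF a] by simp
    then have "(F a b ^^ 1) u = u"
      using F_M1_period_reduction[OF a b, of 1 u p] u that by simp
    then show False using u M1_pos4 by (auto simp: Fix_def)
  qed
  have case_neg: "\<not> (\<exists>u \<in> M1 - (Fix (F a b) \<union> Per2 (F a b)). (F a b ^^ p) u = u)"
    if "J2 < 0" "p \<ge> 3" for p
  proof
    assume "\<exists>u \<in> M1 - (Fix (F a b) \<union> Per2 (F a b)). (F a b ^^ p) u = u"
    then obtain u where u: "u \<in> M1 - (Fix (F a b) \<union> Per2 (F a b))" "(F a b ^^ p) u = u"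
      by blast
    have "b < 1" using assms that by (simp add: mult_neg_pos)
    have "(F a b ^^ (2 * p)) u = ((F a b ^^ p) ^^ 2) u"
      by (simp add: funpow_mult mult.commute)
    then have "(F a b ^^ (2 * p)) u = u"
      using u(2) by (simp add: numeral_2_eq_2)
    then have "(F a b ^^ 2) u = u"
      using F_M1_period_reduction[OF a b ratio_map_twice_strict_mono[OF a b \<open>b < 1\<close>], of u p]
        u that by simp
    then show False using u M1_pos4 by (auto simp: Fix_def Per2_def)
  qed
  show ?thesis using case_pos case_neg by blast
qed

end
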